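(* Let $\mathcal C$ be a category, $I:\mathcal B\to\mathcal C$ the inclusion of a full subcategory with a left adjoint $S:\mathcal C\to\mathcal B$ (unit $\alpha:1\to IS$, counit $SI\cong1$), and $J:\mathcal D\to\mathcal C$ the inclusion of a full subcategory with a right adjoint $T:\mathcal C\to\mathcal D$ (unit $1\cong TJ$, counit $\epsilon:JT\to1$), and suppose $IS\epsilon:ISJT\to IS$ and $JT\alpha:JT\to JTIS$ are isomorphisms. Then $TI:\mathcal B\to\mathcal D$ is left adjoint to $SJ:\mathcal D\to\mathcal B$, and each of $TI$ and $SJ$ is an equivalence of categories. *)

theory Defs
  imports Main
begin

text \<open>Elementary category theory, developed from scratch (no library available).
  Composition convention: cat_comp C g f is "g after f" (defined when cod f = dom g).\<close>

record ('o, 'a) cat =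
  cat_obj   :: "'o set"
  cat_arr   :: "'a set"
  cat_dom   :: "'a \<Rightarrow> 'o"
  cat_cod   :: "'a \<Rightarrow> 'o"
  cat_comp  :: "'a \<Rightarrow> 'a \<Rightarrow> 'a"
  cat_ident :: "'o \<Rightarrow> 'a"

definition category :: "('o, 'a) cat \<Rightarrow> bool" where
  "category C \<longleftrightarrow>
     (\<forall>f\<in>cat_arr C. cat_dom C f \<in> cat_obj C \<and> cat_cod C f \<in> cat_obj C) \<and>
     (\<forall>x\<in>cat_obj C. cat_ident C x \<in> cat_arr C \<and> cat_dom C (cat_ident C x) = x
                       \<and> cat_cod C (cat_ident C x) = x) \<and>
     (\<forall>f\<in>cat_arr C. \<forall>g\<in>cat_arr C. cat_dom C g = cat_cod C f \<longrightarrow>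
         cat_comp C g f \<in> cat_arr C \<and> cat_dom C (cat_comp C g f) = cat_dom C f
         \<and> cat_cod C (cat_comp C g f) = cat_cod C g) \<and>
     (\<forall>f\<in>cat_arr C. cat_comp C (cat_ident C (cat_cod C f)) f = f
                    \<and> cat_comp C f (cat_ident C (cat_dom C f)) = f) \<and>
     (\<forall>f\<in>cat_arr C. \<forall>g\<in>cat_arr C. \<forall>h\<in>cat_arr C.
         cat_dom C g = cat_cod C f \<longrightarrow> cat_dom C h = cat_cod C g \<longrightarrow>
         cat_comp C h (cat_comp C g f) = cat_comp C (cat_comp C h g) f)"

definition full_subcat :: "('o, 'a) cat \<Rightarrow> 'o set \<Rightarrow> ('o, 'a) cat" where
  "full_subcat C X =
     \<lparr> cat_obj = X,
       cat_arr = {f \<in> cat_arr C. cat_dom C f \<in> X \<and> cat_cod C f \<in> X},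
       cat_dom = cat_dom C, cat_cod = cat_cod C,
       cat_comp = cat_comp C, cat_ident = cat_ident C \<rparr>"

definition is_functor ::
  "('o1, 'a1) cat \<Rightarrow> ('o2, 'a2) cat \<Rightarrow> ('o1 \<Rightarrow> 'o2) \<Rightarrow> ('a1 \<Rightarrow> 'a2) \<Rightarrow> bool" where
  "is_functor A B Fo Fa \<longleftrightarrow> category A \<and> category B \<and>
     (\<forall>x\<in>cat_obj A. Fo x \<in> cat_obj B \<and> Fa (cat_ident A x) = cat_ident B (Fo x)) \<and>
     (\<forall>f\<in>cat_arr A. Fa f \<in> cat_arr B \<and> cat_dom B (Fa f) = Fo (cat_dom A f)
                    \<and> cat_cod B (Fa f) = Fo (cat_cod A f)) \<and>
     (\<forall>f\<in>cat_arr A. \<forall>g\<in>cat_arr A. cat_dom A g = cat_cod A f \<longrightarrow>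
         Fa (cat_comp A g f) = cat_comp B (Fa g) (Fa f))"

definition nat_trans ::
  "('o1, 'a1) cat \<Rightarrow> ('o2, 'a2) cat \<Rightarrow> ('o1 \<Rightarrow> 'o2) \<Rightarrow> ('a1 \<Rightarrow> 'a2)
     \<Rightarrow> ('o1 \<Rightarrow> 'o2) \<Rightarrow> ('a1 \<Rightarrow> 'a2) \<Rightarrow> ('o1 \<Rightarrow> 'a2) \<Rightarrow> bool" where
  "nat_trans A B Fo Fa Go Ga \<tau> \<longleftrightarrow> is_functor A B Fo Fa \<and> is_functor A B Go Ga \<and>
     (\<forall>x\<in>cat_obj A. \<tau> x \<in> cat_arr B \<and> cat_dom B (\<tau> x) = Fo x \<and> cat_cod B (\<tau> x) = Go x) \<and>
     (\<forall>f\<in>cat_arr A. cat_comp B (\<tau> (cat_cod A f)) (Fa f) = cat_comp B (Ga f) (\<tau> (cat_dom A f)))"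

definition iso_arr :: "('o, 'a) cat \<Rightarrow> 'a \<Rightarrow> bool" where
  "iso_arr C f \<longleftrightarrow> f \<in> cat_arr C \<and>
     (\<exists>g\<in>cat_arr C. cat_dom C g = cat_cod C f \<and> cat_cod C g = cat_dom C f \<and>
        cat_comp C g f = cat_ident C (cat_dom C f) \<and> cat_comp C f g = cat_ident C (cat_cod C f))"

definition adjunction ::
  "('o1, 'a1) cat \<Rightarrow> ('o2, 'a2) cat \<Rightarrow> ('o1 \<Rightarrow> 'o2) \<Rightarrow> ('a1 \<Rightarrow> 'a2)
     \<Rightarrow> ('o2 \<Rightarrow> 'o1) \<Rightarrow> ('a2 \<Rightarrow> 'a1) \<Rightarrow> ('o1 \<Rightarrow> 'a1) \<Rightarrow> ('o2 \<Rightarrow> 'a2) \<Rightarrow> bool" where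
  "adjunction A B Fo Fa Go Ga \<eta> \<epsilon> \<longleftrightarrow>
     is_functor A B Fo Fa \<and> is_functor B A Go Ga \<and>
     nat_trans A A id id (Go \<circ> Fo) (Ga \<circ> Fa) \<eta> \<and>
     nat_trans B B (Fo \<circ> Go) (Fa \<circ> Ga) id id \<epsilon> \<and>
     (\<forall>x\<in>cat_obj A. cat_comp B (\<epsilon> (Fo x)) (Fa (\<eta> x)) = cat_ident B (Fo x)) \<and>
     (\<forall>y\<in>cat_obj B. cat_comp A (Ga (\<epsilon> y)) (\<eta> (Go y)) = cat_ident A (Go y))"

definition equivalence ::
  "('o1, 'a1) cat \<Rightarrow> ('o2, 'a2) cat \<Rightarrow> ('o1 \<Rightarrow> 'o2) \<Rightarrow> ('a1 \<Rightarrow> 'a2) \<Rightarrow> bool" where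
  "equivalence A B Fo Fa \<longleftrightarrow> is_functor A B Fo Fa \<and>
     (\<exists>(Go :: 'o2 \<Rightarrow> 'o1) (Ga :: 'a2 \<Rightarrow> 'a1) \<eta> \<epsilon>. is_functor B A Go Ga \<and>
        nat_trans A A id id (Go \<circ> Fo) (Ga \<circ> Fa) \<eta> \<and> (\<forall>x\<in>cat_obj A. iso_arr A (\<eta> x)) \<and>
        nat_trans B B (Fo \<circ> Go) (Fa \<circ> Ga) id id \<epsilon> \<and> (\<forall>y\<in>cat_obj B. iso_arr B (\<epsilon> y)))"

end

theory Submission
  imports Defs
begin

text \<open>
  The adjunction \<open>TI \<stileturn> SJ\<close> has unit \<open>\<eta>\<^sub>b = (IS\<epsilon>\<^sub>b)\<inverse> \<circ> \<alpha>\<^sub>b : b \<rightarrow> SJTI b\<close> and counit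
  \<open>\<epsilon>'\<^sub>d = \<epsilon>\<^sub>d \<circ> (JT\<alpha>\<^sub>d)\<inverse> : TISJ d \<rightarrow> d\<close>. On objects of the full subcategories,
  \<open>\<alpha>\<^sub>b\<close> and \<open>\<epsilon>\<^sub>d\<close> are inverse to the invertible counit of \<open>S \<stileturn> I\<close> and unit of \<open>J \<stileturn> T\<close>,
  so \<open>\<eta>\<close> and \<open>\<epsilon>'\<close> are natural isomorphisms. Each triangle identity reduces, after
  inverting the naturality square of \<open>\<alpha>\<close> at \<open>\<epsilon>\<close> (resp. of \<open>\<epsilon>\<close> at \<open>\<alpha>\<close>), to a triangle
  identity of one of the given adjunctions. An adjunction whose unit and counit are
  invertible makes both functors equivalences.
\<close>

definition inv_arr :: "('o, 'a) cat \<Rightarrow> 'a \<Rightarrow> 'a" where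
  "inv_arr C f = (SOME g. g \<in> cat_arr C \<and> cat_dom C g = cat_cod C f \<and> cat_cod C g = cat_dom C f \<and>
     cat_comp C g f = cat_ident C (cat_dom C f) \<and> cat_comp C f g = cat_ident C (cat_cod C f))"

locale cat =
  fixes C :: "('o, 'a) cat"
  assumes category: "category C"
begin

abbreviation obj where "obj x \<equiv> x \<in> cat_obj C"
abbreviation arr where "arr f \<equiv> f \<in> cat_arr C"
abbreviation dom where "dom \<equiv> cat_dom C"
abbreviation cod where "cod \<equiv> cat_cod C"
abbreviation compose (infixr "\<cdot>" 55) where "g \<cdot> f \<equiv> cat_comp C g f"
abbreviation ident where "ident \<equiv> cat_ident C"
abbreviation iso where "iso \<equiv> iso_arr C"
abbreviation inv where "inv \<equiv> inv_arr C"

lemma dom_obj [simp]: "arr f \<Longrightarrow> obj (dom f)"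
  using category unfolding category_def by blast

lemma cod_obj [simp]: "arr f \<Longrightarrow> obj (cod f)"
  using category unfolding category_def by blast

lemma ident_arr [simp]: "obj x \<Longrightarrow> arr (ident x)"
  using category unfolding category_def by blast

lemma dom_ident [simp]: "obj x \<Longrightarrow> dom (ident x) = x"
  using category unfolding category_def by blast

lemma cod_ident [simp]: "obj x \<Longrightarrow> cod (ident x) = x"
  using category unfolding category_def by blast

lemma comp_arr [simp]: "arr f \<Longrightarrow> arr g \<Longrightarrow> dom g = cod f \<Longrightarrow> arr (g \<cdot> f)"
  using category unfolding category_def by blast

lemma dom_comp [simp]: "arr f \<Longrightarrow> arr g \<Longrightarrow> dom g = cod f \<Longrightarrow> dom (g \<cdot> f) = dom f"
  using category unfolding category_def by blast

lemma cod_comp [simp]: "arr f \<Longrightarrow> arr g \<Longrightarrow> dom g = cod f \<Longrightarrow> cod (g \<cdot> f) = cod g"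
  using category unfolding category_def by blast

lemma comp_ident_left [simp]: "arr f \<Longrightarrow> cod f = x \<Longrightarrow> ident x \<cdot> f = f"
  using category unfolding category_def by blast

lemma comp_ident_right [simp]: "arr f \<Longrightarrow> dom f = x \<Longrightarrow> f \<cdot> ident x = f"
  using category unfolding category_def by blast

lemma comp_assoc [simp]:
  "arr f \<Longrightarrow> arr g \<Longrightarrow> arr h \<Longrightarrow> dom g = cod f \<Longrightarrow> dom h = cod g \<Longrightarrow> (h \<cdot> g) \<cdot> f = h \<cdot> g \<cdot> f"
  using category unfolding category_def by metis

lemma inv_arr_props:
  assumes "iso f"
  shows "arr (inv f) \<and> dom (inv f) = cod f \<and> cod (inv f) = dom f \<and>
    inv f \<cdot> f = ident (dom f) \<and> f \<cdot> inv f = ident (cod f)"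
  unfolding inv_arr_def by (rule someI_ex) (use assms in \<open>auto simp: iso_arr_def\<close>)

lemma iso_arr [simp]: "iso f \<Longrightarrow> arr f"
  unfolding iso_arr_def by blast

lemma arr_inv [simp]: "iso f \<Longrightarrow> arr (inv f)"
  and dom_inv [simp]: "iso f \<Longrightarrow> dom (inv f) = cod f"
  and cod_inv [simp]: "iso f \<Longrightarrow> cod (inv f) = dom f"
  and comp_inv_left [simp]: "iso f \<Longrightarrow> dom f = x \<Longrightarrow> inv f \<cdot> f = ident x"
  and comp_inv_right [simp]: "iso f \<Longrightarrow> cod f = x \<Longrightarrow> f \<cdot> inv f = ident x"
  using inv_arr_props by blast+

lemma inv_comp_cancel [simp]: "iso f \<Longrightarrow> arr g \<Longrightarrow> cod g = dom f \<Longrightarrow> inv f \<cdot> f \<cdot> g = g"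
  by (subst comp_assoc[symmetric]) auto

lemma comp_inv_cancel [simp]: "iso f \<Longrightarrow> arr g \<Longrightarrow> cod g = cod f \<Longrightarrow> f \<cdot> inv f \<cdot> g = g"
  by (subst comp_assoc[symmetric]) auto

lemma inv_unique_left:
  assumes "iso f" "arr g" "cod g = dom f" "f \<cdot> g = ident (cod f)"
  shows "g = inv f"
proof -
  from assms(1-3) have "g = inv f \<cdot> f \<cdot> g" by simp
  also have "\<dots> = inv f" using assms(1,4) by (simp del: inv_comp_cancel)
  finally show ?thesis .
qed

lemma inv_unique_right:
  assumes "iso f" "arr g" "dom g = cod f" "g \<cdot> f = ident (dom f)"
  shows "g = inv f"
proof -
  from assms(1-3) have "g = g \<cdot> f \<cdot> inv f" by simp
  also have "\<dots> = (g \<cdot> f) \<cdot> inv f" using assms(1-3) by simp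
  also have "\<dots> = inv f" using assms(1,4) by simp
  finally show ?thesis .
qed

lemma iso_inv [simp]: "iso f \<Longrightarrow> iso (inv f)"
  unfolding iso_arr_def[of C "inv f"] by (intro conjI bexI[of _ f]) auto

lemma inv_inv [simp]: "iso f \<Longrightarrow> inv (inv f) = f"
  by (rule inv_unique_right[symmetric]) auto

lemma iso_comp [simp]: "iso f \<Longrightarrow> iso g \<Longrightarrow> dom g = cod f \<Longrightarrow> iso (g \<cdot> f)"
  unfolding iso_arr_def[of C "g \<cdot> f"] by (intro conjI bexI[of _ "inv f \<cdot> inv g"]) auto

lemma inv_comp: "iso f \<Longrightarrow> iso g \<Longrightarrow> dom g = cod f \<Longrightarrow> inv (g \<cdot> f) = inv f \<cdot> inv g"
  by (rule inv_unique_right[symmetric]) auto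

lemma inv_comp_eq_of_comp_eq:
  assumes "iso f" "iso g" "iso h" "iso k" "dom g = cod f" "dom k = cod h" "g \<cdot> f = k \<cdot> h"
  shows "inv f \<cdot> inv g = inv h \<cdot> inv k"
proof -
  have "inv f \<cdot> inv g = inv (g \<cdot> f)" using assms(1,2,5) by (simp add: inv_comp)
  also have "\<dots> = inv h \<cdot> inv k" using assms(3,4,6,7) by (simp add: inv_comp)
  finally show ?thesis .
qed

lemma inv_comp_eq_comp_inv:
  assumes "iso a" "iso b" "arr g" "arr h" "dom g = cod a" "cod h = dom b" "g \<cdot> a = b \<cdot> h"
  shows "inv b \<cdot> g = h \<cdot> inv a"
proof -
  have "dom h = dom a" "cod g = cod b"
    using arg_cong[OF assms(7), of dom] arg_cong[OF assms(7), of cod] assms(1-6) by auto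
  then have "inv b \<cdot> g = inv b \<cdot> (g \<cdot> a) \<cdot> inv a"
    using assms(1-6) by simp
  also have "\<dots> = h \<cdot> inv a"
    using assms \<open>dom h = dom a\<close> by simp
  finally show ?thesis .
qed

end

lemma is_functor_cat_dom: "is_functor A B Fo Fa \<Longrightarrow> cat A"
  and is_functor_cat_cod: "is_functor A B Fo Fa \<Longrightarrow> cat B"
  unfolding is_functor_def by (simp_all add: cat.intro)

lemma functor_preserves_iso:
  assumes F: "is_functor A B Fo Fa" and f: "iso_arr A f"
  shows "iso_arr B (Fa f)" and "Fa (inv_arr A f) = inv_arr B (Fa f)"
proof -
  interpret A: cat A using is_functor_cat_dom[OF F] .
  interpret B: cat B using is_functor_cat_cod[OF F] .
  have arr: "\<And>g. A.arr g \<Longrightarrow> B.arr (Fa g) \<and> B.dom (Fa g) = Fo (A.dom g) \<and> B.cod (Fa g) = Fo (A.cod g)"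
    and comp: "\<And>g h. A.arr g \<Longrightarrow> A.arr h \<Longrightarrow> A.dom h = A.cod g \<Longrightarrow> Fa (A.compose h g) = B.compose (Fa h) (Fa g)"
    and ident: "\<And>x. A.obj x \<Longrightarrow> Fa (A.ident x) = B.ident (Fo x)"
    using F unfolding is_functor_def by blast+
  have "A.arr f" "A.arr (A.inv f)" using f by auto
  note Ff = arr[OF this(1)] and Finv = arr[OF this(2)]
  have left: "B.compose (Fa (A.inv f)) (Fa f) = B.ident (B.dom (Fa f))"
    using comp[of f "A.inv f"] ident f Ff by simp
  have right: "B.compose (Fa f) (Fa (A.inv f)) = B.ident (B.cod (Fa f))"
    using comp[of "A.inv f" f] ident f Ff by simp
  show iso: "B.iso (Fa f)"
    unfolding iso_arr_def using left right Ff Finv f by (intro conjI bexI[of _ "Fa (A.inv f)"]) auto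
  show "Fa (A.inv f) = B.inv (Fa f)"
    using iso Ff Finv f left by (intro B.inv_unique_right) auto
qed

lemma nat_trans_inv_arr:
  assumes \<tau>: "nat_trans A B Fo Fa Go Ga \<tau>" and iso: "\<forall>x\<in>cat_obj A. iso_arr B (\<tau> x)"
  shows "nat_trans A B Go Ga Fo Fa (\<lambda>x. inv_arr B (\<tau> x))"
proof -
  have F: "is_functor A B Fo Fa" and G: "is_functor A B Go Ga"
    using \<tau> unfolding nat_trans_def by auto
  interpret A: cat A using is_functor_cat_dom[OF F] .
  interpret B: cat B using is_functor_cat_cod[OF F] .
  have Farr: "\<And>f. A.arr f \<Longrightarrow> B.arr (Fa f) \<and> B.dom (Fa f) = Fo (A.dom f) \<and> B.cod (Fa f) = Fo (A.cod f)"
    using F unfolding is_functor_def by blast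
  have Garr: "\<And>f. A.arr f \<Longrightarrow> B.arr (Ga f) \<and> B.dom (Ga f) = Go (A.dom f) \<and> B.cod (Ga f) = Go (A.cod f)"
    using G unfolding is_functor_def by blast
  have component: "\<And>x. A.obj x \<Longrightarrow> B.arr (\<tau> x) \<and> B.dom (\<tau> x) = Fo x \<and> B.cod (\<tau> x) = Go x"
    and naturality: "\<And>f. A.arr f \<Longrightarrow> B.compose (\<tau> (A.cod f)) (Fa f) = B.compose (Ga f) (\<tau> (A.dom f))"
    using \<tau> unfolding nat_trans_def by blast+
  show ?thesis
    unfolding nat_trans_def
  proof (intro conjI F G ballI)
    fix x assume "A.obj x"
    then show "B.arr (B.inv (\<tau> x))" "B.dom (B.inv (\<tau> x)) = Go x" "B.cod (B.inv (\<tau> x)) = Fo x"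
      using iso component by auto
  next
    fix f assume f: "A.arr f"
    show "B.compose (B.inv (\<tau> (A.cod f))) (Ga f) = B.compose (Fa f) (B.inv (\<tau> (A.dom f)))"
      by (rule B.inv_comp_eq_comp_inv) (use f iso component Farr Garr naturality[OF f] in auto)
  qed
qed

lemma equivalences_of_nat_isos:
  assumes F: "is_functor A B Fo Fa" and G: "is_functor B A Go Ga"
    and \<eta>: "nat_trans A A id id (Go \<circ> Fo) (Ga \<circ> Fa) \<eta>" and \<eta>_iso: "\<forall>x\<in>cat_obj A. iso_arr A (\<eta> x)"
    and \<epsilon>: "nat_trans B B (Fo \<circ> Go) (Fa \<circ> Ga) id id \<epsilon>" and \<epsilon>_iso: "\<forall>y\<in>cat_obj B. iso_arr B (\<epsilon> y)"
  shows "equivalence A B Fo Fa" and "equivalence B A Go Ga"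
proof -
  show "equivalence A B Fo Fa"
    unfolding equivalence_def using assms by blast
  interpret A: cat A using is_functor_cat_dom[OF F] .
  interpret B: cat B using is_functor_cat_cod[OF F] .
  show "equivalence B A Go Ga"
    unfolding equivalence_def
    using G F nat_trans_inv_arr[OF \<epsilon> \<epsilon>_iso] nat_trans_inv_arr[OF \<eta> \<eta>_iso] \<eta>_iso \<epsilon>_iso
    by (intro conjI exI[of _ Fo] exI[of _ Fa] exI[of _ "\<lambda>y. B.inv (\<epsilon> y)"]
        exI[of _ "\<lambda>x. A.inv (\<eta> x)"]) auto
qed

lemma full_subcat_simps [simp]:
  "cat_obj (full_subcat C X) = X"
  "cat_arr (full_subcat C X) = {f \<in> cat_arr C. cat_dom C f \<in> X \<and> cat_cod C f \<in> X}"
  "cat_dom (full_subcat C X) = cat_dom C" "cat_cod (full_subcat C X) = cat_cod C"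
  "cat_comp (full_subcat C X) = cat_comp C" "cat_ident (full_subcat C X) = cat_ident C"
  by (simp_all add: full_subcat_def)

lemma category_full_subcat: "category C \<Longrightarrow> X \<subseteq> cat_obj C \<Longrightarrow> category (full_subcat C X)"
  unfolding category_def by auto

lemma iso_arr_full_subcat:
  "iso_arr (full_subcat C X) f \<longleftrightarrow> iso_arr C f \<and> cat_dom C f \<in> X \<and> cat_cod C f \<in> X"
  unfolding iso_arr_def by auto

lemma is_functor_into_full_subcat:
  "is_functor A (full_subcat C X) Fo Fa \<Longrightarrow> category C \<Longrightarrow> X \<subseteq> cat_obj C \<Longrightarrow>
    is_functor A C Fo Fa"
  unfolding is_functor_def by auto

lemma is_functor_restrict:
  "is_functor C B Fo Fa \<Longrightarrow> X \<subseteq> cat_obj C \<Longrightarrow> is_functor (full_subcat C X) B Fo Fa"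
  unfolding is_functor_def using category_full_subcat[of C X] by auto

lemma is_functor_comp:
  "is_functor A B Fo Fa \<Longrightarrow> is_functor B C Go Ga \<Longrightarrow> is_functor A C (Go \<circ> Fo) (Ga \<circ> Fa)"
  unfolding is_functor_def by auto

lemma is_functor_id: "category A \<Longrightarrow> is_functor A A id id"
  unfolding is_functor_def category_def by auto

locale reflective_coreflective = cat C
  for C :: "('o, 'a) cat" +
  fixes XB XD :: "'o set"
    and So To :: "'o \<Rightarrow> 'o" and Sa Ta :: "'a \<Rightarrow> 'a"
    and \<alpha> \<beta> \<gamma> \<epsilon> :: "'o \<Rightarrow> 'a"
  assumes XB: "XB \<subseteq> cat_obj C" and XD: "XD \<subseteq> cat_obj C"
    and adjS: "adjunction C (full_subcat C XB) So Sa id id \<alpha> \<beta>"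
    and counitS: "\<forall>b\<in>XB. iso_arr (full_subcat C XB) (\<beta> b)"
    and adjT: "adjunction (full_subcat C XD) C id id To Ta \<gamma> \<epsilon>"
    and unitT: "\<forall>d\<in>XD. iso_arr (full_subcat C XD) (\<gamma> d)"
    and ISeps: "\<forall>c\<in>cat_obj C. iso_arr C (Sa (\<epsilon> c))"
    and JTalpha: "\<forall>c\<in>cat_obj C. iso_arr C (Ta (\<alpha> c))"
begin

abbreviation B where "B \<equiv> full_subcat C XB"
abbreviation D where "D \<equiv> full_subcat C XD"

lemma obj_XB [simp]: "b \<in> XB \<Longrightarrow> obj b"
  and obj_XD [simp]: "d \<in> XD \<Longrightarrow> obj d"
  using XB XD by auto

lemma S_functor: "is_functor C B So Sa"
  and T_functor: "is_functor C D To Ta"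
  using adjS adjT unfolding adjunction_def by blast+

text \<open>The full subcategories share objects and arrows with \<open>C\<close>, so \<open>So, Sa\<close> also denote
  the endofunctor \<open>IS\<close> of \<open>C\<close>, and \<open>To, Ta\<close> the endofunctor \<open>JT\<close>.\<close>

lemma S_endofunctor: "is_functor C C So Sa"
  using is_functor_into_full_subcat[OF S_functor category XB] .

lemma T_endofunctor: "is_functor C C To Ta"
  using is_functor_into_full_subcat[OF T_functor category XD] .

lemma So_XB [simp]: "obj c \<Longrightarrow> So c \<in> XB"
  and To_XD [simp]: "obj c \<Longrightarrow> To c \<in> XD"
  using S_functor T_functor unfolding is_functor_def by auto

lemma Sa_arr [simp]: "arr f \<Longrightarrow> arr (Sa f)"
  and dom_Sa [simp]: "arr f \<Longrightarrow> dom (Sa f) = So (dom f)"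
  and cod_Sa [simp]: "arr f \<Longrightarrow> cod (Sa f) = So (cod f)"
  and Sa_comp: "arr f \<Longrightarrow> arr g \<Longrightarrow> dom g = cod f \<Longrightarrow> Sa (g \<cdot> f) = Sa g \<cdot> Sa f"
  using S_endofunctor unfolding is_functor_def by auto

lemma Ta_arr [simp]: "arr f \<Longrightarrow> arr (Ta f)"
  and dom_Ta [simp]: "arr f \<Longrightarrow> dom (Ta f) = To (dom f)"
  and cod_Ta [simp]: "arr f \<Longrightarrow> cod (Ta f) = To (cod f)"
  and Ta_comp: "arr f \<Longrightarrow> arr g \<Longrightarrow> dom g = cod f \<Longrightarrow> Ta (g \<cdot> f) = Ta g \<cdot> Ta f"
  using T_endofunctor unfolding is_functor_def by auto

lemmas Sa_iso [simp] = functor_preserves_iso(1)[OF S_endofunctor]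
  and Sa_inv = functor_preserves_iso(2)[OF S_endofunctor]
  and Ta_iso [simp] = functor_preserves_iso(1)[OF T_endofunctor]
  and Ta_inv = functor_preserves_iso(2)[OF T_endofunctor]

lemma alpha [simp]: "obj c \<Longrightarrow> arr (\<alpha> c)" "obj c \<Longrightarrow> dom (\<alpha> c) = c" "obj c \<Longrightarrow> cod (\<alpha> c) = So c"
  and alpha_natural: "arr f \<Longrightarrow> \<alpha> (cod f) \<cdot> f = Sa f \<cdot> \<alpha> (dom f)"
  and beta [simp]: "b \<in> XB \<Longrightarrow> arr (\<beta> b)" "b \<in> XB \<Longrightarrow> dom (\<beta> b) = So b" "b \<in> XB \<Longrightarrow> cod (\<beta> b) = b"
  and S_triangle_left: "obj c \<Longrightarrow> \<beta> (So c) \<cdot> Sa (\<alpha> c) = ident (So c)"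
  and S_triangle_right: "b \<in> XB \<Longrightarrow> \<beta> b \<cdot> \<alpha> b = ident b"
  using adjS unfolding adjunction_def nat_trans_def by auto

lemma gamma [simp]: "d \<in> XD \<Longrightarrow> arr (\<gamma> d)" "d \<in> XD \<Longrightarrow> dom (\<gamma> d) = d" "d \<in> XD \<Longrightarrow> cod (\<gamma> d) = To d"
  and epsilon [simp]: "obj c \<Longrightarrow> arr (\<epsilon> c)" "obj c \<Longrightarrow> dom (\<epsilon> c) = To c" "obj c \<Longrightarrow> cod (\<epsilon> c) = c"
  and epsilon_natural: "arr f \<Longrightarrow> \<epsilon> (cod f) \<cdot> Ta f = f \<cdot> \<epsilon> (dom f)"
  and T_triangle_left: "d \<in> XD \<Longrightarrow> \<epsilon> d \<cdot> \<gamma> d = ident d"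
  and T_triangle_right: "obj c \<Longrightarrow> Ta (\<epsilon> c) \<cdot> \<gamma> (To c) = ident (To c)"
  using adjT unfolding adjunction_def nat_trans_def by auto

lemma beta_iso [simp]: "b \<in> XB \<Longrightarrow> iso (\<beta> b)"
  and gamma_iso [simp]: "d \<in> XD \<Longrightarrow> iso (\<gamma> d)"
  and Sa_epsilon_iso [simp]: "obj c \<Longrightarrow> iso (Sa (\<epsilon> c))"
  and Ta_alpha_iso [simp]: "obj c \<Longrightarrow> iso (Ta (\<alpha> c))"
  using counitS unitT ISeps JTalpha by (auto simp: iso_arr_full_subcat)

lemma alpha_eq_inv_beta: "b \<in> XB \<Longrightarrow> \<alpha> b = inv (\<beta> b)"
  by (rule inv_unique_left) (auto simp: S_triangle_right)

lemma Sa_alpha_eq_inv_beta: "obj c \<Longrightarrow> Sa (\<alpha> c) = inv (\<beta> (So c))"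
  by (rule inv_unique_left) (auto simp: S_triangle_left)

lemma epsilon_eq_inv_gamma: "d \<in> XD \<Longrightarrow> \<epsilon> d = inv (\<gamma> d)"
  by (rule inv_unique_right) (auto simp: T_triangle_left)

lemma Ta_epsilon_eq_inv_gamma: "obj c \<Longrightarrow> Ta (\<epsilon> c) = inv (\<gamma> (To c))"
  by (rule inv_unique_right) (auto simp: T_triangle_right)

lemma alpha_iso [simp]: "b \<in> XB \<Longrightarrow> iso (\<alpha> b)"
  and Sa_alpha_iso [simp]: "obj c \<Longrightarrow> iso (Sa (\<alpha> c))"
  and epsilon_iso [simp]: "d \<in> XD \<Longrightarrow> iso (\<epsilon> d)"
  and Ta_epsilon_iso [simp]: "obj c \<Longrightarrow> iso (Ta (\<epsilon> c))"
  by (simp_all add: alpha_eq_inv_beta Sa_alpha_eq_inv_beta epsilon_eq_inv_gamma Ta_epsilon_eq_inv_gamma)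

definition \<eta> :: "'o \<Rightarrow> 'a" where "\<eta> b = inv (Sa (\<epsilon> b)) \<cdot> \<alpha> b"
definition \<epsilon>' :: "'o \<Rightarrow> 'a" where "\<epsilon>' d = \<epsilon> d \<cdot> inv (Ta (\<alpha> d))"

lemma eta [simp]: "b \<in> XB \<Longrightarrow> arr (\<eta> b)" "b \<in> XB \<Longrightarrow> dom (\<eta> b) = b"
    "b \<in> XB \<Longrightarrow> cod (\<eta> b) = So (To b)"
  and eta_iso [simp]: "b \<in> XB \<Longrightarrow> iso (\<eta> b)"
  unfolding \<eta>_def by auto

lemma epsilon' [simp]: "d \<in> XD \<Longrightarrow> arr (\<epsilon>' d)" "d \<in> XD \<Longrightarrow> dom (\<epsilon>' d) = To (So d)"
    "d \<in> XD \<Longrightarrow> cod (\<epsilon>' d) = d"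
  and epsilon'_iso [simp]: "d \<in> XD \<Longrightarrow> iso (\<epsilon>' d)"
  unfolding \<epsilon>'_def by auto

lemma eta_natural:
  assumes "arr f" "dom f \<in> XB" "cod f \<in> XB"
  shows "\<eta> (cod f) \<cdot> f = Sa (Ta f) \<cdot> \<eta> (dom f)"
proof -
  have "Sa f \<cdot> Sa (\<epsilon> (dom f)) = Sa (\<epsilon> (cod f)) \<cdot> Sa (Ta f)"
    using arg_cong[OF epsilon_natural[OF assms(1)], of Sa] assms by (simp add: Sa_comp)
  then have swap: "inv (Sa (\<epsilon> (cod f))) \<cdot> Sa f = Sa (Ta f) \<cdot> inv (Sa (\<epsilon> (dom f)))"
    using assms by (intro inv_comp_eq_comp_inv) auto
  have "\<eta> (cod f) \<cdot> f = inv (Sa (\<epsilon> (cod f))) \<cdot> Sa f \<cdot> \<alpha> (dom f)"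
    unfolding \<eta>_def using assms by (simp add: alpha_natural)
  also have "\<dots> = (inv (Sa (\<epsilon> (cod f))) \<cdot> Sa f) \<cdot> \<alpha> (dom f)"
    using assms by simp
  also have "\<dots> = Sa (Ta f) \<cdot> \<eta> (dom f)"
    unfolding swap \<eta>_def using assms by simp
  finally show ?thesis .
qed

lemma epsilon'_natural:
  assumes "arr f" "dom f \<in> XD" "cod f \<in> XD"
  shows "\<epsilon>' (cod f) \<cdot> Ta (Sa f) = f \<cdot> \<epsilon>' (dom f)"
proof -
  have "Ta (Sa f) \<cdot> Ta (\<alpha> (dom f)) = Ta (\<alpha> (cod f)) \<cdot> Ta f"
    using arg_cong[OF alpha_natural[OF assms(1)], of Ta] assms by (simp add: Ta_comp)
  then have swap: "inv (Ta (\<alpha> (cod f))) \<cdot> Ta (Sa f) = Ta f \<cdot> inv (Ta (\<alpha> (dom f)))"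
    using assms by (intro inv_comp_eq_comp_inv) auto
  have "\<epsilon>' (cod f) \<cdot> Ta (Sa f) = \<epsilon> (cod f) \<cdot> (inv (Ta (\<alpha> (cod f))) \<cdot> Ta (Sa f))"
    unfolding \<epsilon>'_def using assms by simp
  also have "\<dots> = (\<epsilon> (cod f) \<cdot> Ta f) \<cdot> inv (Ta (\<alpha> (dom f)))"
    unfolding swap using assms by simp
  also have "\<dots> = f \<cdot> \<epsilon>' (dom f)"
    unfolding epsilon_natural[OF assms(1)] \<epsilon>'_def using assms by simp
  finally show ?thesis .
qed

lemma triangle_counit_unit:
  assumes "b \<in> XB"
  shows "\<epsilon>' (To b) \<cdot> Ta (\<eta> b) = ident (To b)"
proof -
  have "obj b" using assms by simp
  have "Sa (\<epsilon> b) \<cdot> \<alpha> (To b) = \<alpha> b \<cdot> \<epsilon> b"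
    using alpha_natural[of "\<epsilon> b"] \<open>obj b\<close> by simp
  then have "Ta (Sa (\<epsilon> b)) \<cdot> Ta (\<alpha> (To b)) = Ta (\<alpha> b) \<cdot> Ta (\<epsilon> b)"
    using \<open>obj b\<close> by (simp flip: Ta_comp)
  then have square: "inv (Ta (\<alpha> (To b))) \<cdot> inv (Ta (Sa (\<epsilon> b))) = inv (Ta (\<epsilon> b)) \<cdot> inv (Ta (\<alpha> b))"
    using \<open>obj b\<close> by (intro inv_comp_eq_of_comp_eq) auto
  have "\<epsilon>' (To b) \<cdot> Ta (\<eta> b)
      = \<epsilon> (To b) \<cdot> (inv (Ta (\<alpha> (To b))) \<cdot> inv (Ta (Sa (\<epsilon> b)))) \<cdot> Ta (\<alpha> b)"
    unfolding \<epsilon>'_def \<eta>_def using \<open>obj b\<close> by (simp add: Ta_comp Ta_inv)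
  also have "\<dots> = \<epsilon> (To b) \<cdot> inv (Ta (\<epsilon> b))"
    unfolding square using \<open>obj b\<close> by simp
  also have "\<dots> = \<epsilon> (To b) \<cdot> \<gamma> (To b)"
    using \<open>obj b\<close> by (simp add: Ta_epsilon_eq_inv_gamma)
  also have "\<dots> = ident (To b)"
    using \<open>obj b\<close> by (simp add: T_triangle_left)
  finally show ?thesis .
qed

lemma triangle_unit_counit:
  assumes "d \<in> XD"
  shows "Sa (\<epsilon>' d) \<cdot> \<eta> (So d) = ident (So d)"
proof -
  have "obj d" using assms by simp
  have "\<epsilon> (So d) \<cdot> Ta (\<alpha> d) = \<alpha> d \<cdot> \<epsilon> d"
    using epsilon_natural[of "\<alpha> d"] \<open>obj d\<close> by simp
  then have "Sa (\<epsilon> (So d)) \<cdot> Sa (Ta (\<alpha> d)) = Sa (\<alpha> d) \<cdot> Sa (\<epsilon> d)"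
    using \<open>obj d\<close> by (simp flip: Sa_comp)
  then have square: "inv (Sa (Ta (\<alpha> d))) \<cdot> inv (Sa (\<epsilon> (So d))) = inv (Sa (\<epsilon> d)) \<cdot> inv (Sa (\<alpha> d))"
    using \<open>obj d\<close> by (intro inv_comp_eq_of_comp_eq) auto
  have "Sa (\<epsilon>' d) \<cdot> \<eta> (So d)
      = Sa (\<epsilon> d) \<cdot> (inv (Sa (Ta (\<alpha> d))) \<cdot> inv (Sa (\<epsilon> (So d)))) \<cdot> \<alpha> (So d)"
    unfolding \<epsilon>'_def \<eta>_def using \<open>obj d\<close> by (simp add: Sa_comp Sa_inv)
  also have "\<dots> = inv (Sa (\<alpha> d)) \<cdot> \<alpha> (So d)"
    unfolding square using \<open>obj d\<close> by simp
  also have "\<dots> = \<beta> (So d) \<cdot> \<alpha> (So d)"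
    using \<open>obj d\<close> by (simp add: Sa_alpha_eq_inv_beta)
  also have "\<dots> = ident (So d)"
    using \<open>obj d\<close> by (simp add: S_triangle_right)
  finally show ?thesis .
qed

lemma TI_functor: "is_functor B D To Ta"
  using is_functor_restrict[OF T_functor XB] .

lemma SJ_functor: "is_functor D B So Sa"
  using is_functor_restrict[OF S_functor XD] .

lemma eta_nat_trans: "nat_trans B B id id (So \<circ> To) (Sa \<circ> Ta) \<eta>"
  unfolding nat_trans_def
  using is_functor_id[OF category_full_subcat[OF category XB]]
    is_functor_comp[OF TI_functor SJ_functor] eta_natural
  by auto

lemma epsilon'_nat_trans: "nat_trans D D (To \<circ> So) (Ta \<circ> Sa) id id \<epsilon>'"
  unfolding nat_trans_def
  using is_functor_id[OF category_full_subcat[OF category XD]]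
    is_functor_comp[OF SJ_functor TI_functor] epsilon'_natural
  by auto

end

theorem corollaryA6:
  fixes C :: "('o, 'a) cat"
    and XB XD :: "'o set"
    and So To :: "'o \<Rightarrow> 'o" and Sa Ta :: "'a \<Rightarrow> 'a"
    and \<alpha> \<beta> \<gamma> \<epsilon> :: "'o \<Rightarrow> 'a"
  assumes C: "category C"
    and XB: "XB \<subseteq> cat_obj C" and XD: "XD \<subseteq> cat_obj C"
    and adjS: "adjunction C (full_subcat C XB) So Sa id id \<alpha> \<beta>"
    and counitS: "\<forall>b\<in>XB. iso_arr (full_subcat C XB) (\<beta> b)"
    and adjT: "adjunction (full_subcat C XD) C id id To Ta \<gamma> \<epsilon>"
    and unitT: "\<forall>d\<in>XD. iso_arr (full_subcat C XD) (\<gamma> d)"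
    and ISeps: "\<forall>c\<in>cat_obj C. iso_arr C (Sa (\<epsilon> c))"
    and JTalpha: "\<forall>c\<in>cat_obj C. iso_arr C (Ta (\<alpha> c))"
  shows "(\<exists>\<eta> \<epsilon>'. adjunction (full_subcat C XB) (full_subcat C XD) To Ta So Sa \<eta> \<epsilon>')
         \<and> equivalence (full_subcat C XB) (full_subcat C XD) To Ta
         \<and> equivalence (full_subcat C XD) (full_subcat C XB) So Sa"
proof -
  interpret reflective_coreflective C XB XD So To Sa Ta \<alpha> \<beta> \<gamma> \<epsilon>
    by unfold_locales (fact assms)+
  have "adjunction B D To Ta So Sa \<eta> \<epsilon>'"
    unfolding adjunction_def
    using TI_functor SJ_functor eta_nat_trans epsilon'_nat_trans
      triangle_counit_unit triangle_unit_counit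
    by auto
  moreover have "\<forall>b\<in>XB. iso_arr B (\<eta> b)" and "\<forall>d\<in>XD. iso_arr D (\<epsilon>' d)"
    by (simp_all add: iso_arr_full_subcat)
  ultimately show ?thesis
    using equivalences_of_nat_isos[OF TI_functor SJ_functor eta_nat_trans _ epsilon'_nat_trans]
    by auto
qed

end
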